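(* Let $\mathcal{X}$ be a Banach space with $\mathcal{X} \simeq \big(\sum \mathcal{X}\big)_p$ for some $1 \le p \le \infty$ or $p = 0$. Let $\mathcal{D}$ be a decomposition of $\mathcal{X}$ and let $L$ be the left shift associated with $\mathcal{D}$. Then for any $T_1, T_2, T_3 \in \mathcal{L}(\mathcal{X})$, the operator on $\mathcal{X} \oplus \mathcal{X}$ given by the matrix $\begin{pmatrix} T_1 & L \\ T_2 & T_3 \end{pmatrix}$ is a commutator in $\mathcal{L}(\mathcal{X} \oplus \mathcal{X})$, i.e. equals $AB - BA$ for some $A, B \in \mathcal{L}(\mathcal{X}\oplus\mathcal{X})$.
   Context: $\big(\sum Y\big)_p$ denotes the $\ell_p$-sum of countably many copies of $Y$ (the $c_0$-sum if $p=0$). A decomposition of $\mathcal{X}$ is a sequence $\mathcal{D} = \{X_i\}_{i=0}^\infty$ of closed subspaces such that: there are uniformly bounded projections $P_i$ on $\mathcal{X}$ with $P_i\mathcal{X} = X_i$ and $P_iP_j = 0$ for $i \ne j$; there are isomorphisms $\psi_i : X_i \to \mathcal{X}$ with $\|\psi_i^{-1}\| = 1$ and $\sup_i \|\psi_i\| < \infty$; and $Sx = (\psi_i P_i x)_{i}$ defines a surjective isomorphism $S : \mathcal{X} \to \big(\sum \mathcal{X}\big)_p$. The left shift associated with $\mathcal{D}$ is $S^{-1} L_0 S$, where $L_0(y_0, y_1, y_2, \ldots) = (y_1, y_2, \ldots)$ is the left shift on $\big(\sum \mathcal{X}\big)_p$. *)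

theory Defs
  imports "HOL-Analysis.Analysis"
begin

text \<open>The index p of an l_p-sum is an extended real: p = 0 encodes the c_0-sum,
  p = \<infinity> the l_\<infinity>-sum, and 1 \<le> p < \<infinity> the usual l_p-sum.\<close>

definition valid_p :: "ereal \<Rightarrow> bool" where
  "valid_p p \<longleftrightarrow> p = 0 \<or> 1 \<le> p"

definition lp_seq :: "ereal \<Rightarrow> (nat \<Rightarrow> 'a::real_normed_vector) set" where
  "lp_seq p =
     (if p = 0 then {x. x \<longlonglongrightarrow> 0}
      else if p = \<infinity> then {x. bounded (range x)}
      else {x. summable (\<lambda>n. norm (x n) powr real_of_ereal p)})"

definition lp_norm :: "ereal \<Rightarrow> (nat \<Rightarrow> 'a::real_normed_vector) \<Rightarrow> real" where
  "lp_norm p x =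
     (if p = 0 \<or> p = \<infinity> then (SUP n. norm (x n))
      else (\<Sum>n. norm (x n) powr real_of_ereal p) powr (1 / real_of_ereal p))"

definition lp_iso :: "ereal \<Rightarrow> ('a::real_normed_vector \<Rightarrow> (nat \<Rightarrow> 'a)) \<Rightarrow> bool" where
  "lp_iso p S \<longleftrightarrow>
     (\<forall>x y. S (x + y) = (\<lambda>n. S x n + S y n)) \<and>
     (\<forall>c x. S (c *\<^sub>R x) = (\<lambda>n. c *\<^sub>R S x n)) \<and>
     range S = lp_seq p \<and>
     (\<exists>C. \<forall>x. lp_norm p (S x) \<le> C * norm x) \<and>
     (\<exists>c>0. \<forall>x. c * norm x \<le> lp_norm p (S x))"

definition isomorphic_to_lp_sum :: "ereal \<Rightarrow> 'a::real_normed_vector itself \<Rightarrow> bool" where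
  "isomorphic_to_lp_sum p _ \<longleftrightarrow> (\<exists>S::'a \<Rightarrow> nat \<Rightarrow> 'a. lp_iso p S)"

definition decomp_S :: "(nat \<Rightarrow> 'a::real_normed_vector \<Rightarrow> 'a) \<Rightarrow> (nat \<Rightarrow> 'a \<Rightarrow> 'a) \<Rightarrow> 'a \<Rightarrow> nat \<Rightarrow> 'a" where
  "decomp_S \<psi> P x = (\<lambda>i. \<psi> i (P i x))"

definition decomposition ::
  "ereal \<Rightarrow> (nat \<Rightarrow> 'a::banach set) \<Rightarrow> (nat \<Rightarrow> 'a \<Rightarrow> 'a) \<Rightarrow> (nat \<Rightarrow> 'a \<Rightarrow> 'a) \<Rightarrow> bool" where
  "decomposition p X P \<psi> \<longleftrightarrow>
     (\<forall>i. subspace (X i) \<and> closed (X i)) \<and>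
     (\<forall>i. bounded_linear (P i) \<and> (\<forall>x. P i (P i x) = P i x) \<and> range (P i) = X i) \<and>
     (\<exists>M. \<forall>i x. norm (P i x) \<le> M * norm x) \<and>
     (\<forall>i j x. i \<noteq> j \<longrightarrow> P i (P j x) = 0) \<and>
     (\<forall>i. bij_betw (\<psi> i) (X i) UNIV \<and>
          (\<forall>x\<in>X i. \<forall>y\<in>X i. \<psi> i (x + y) = \<psi> i x + \<psi> i y) \<and>
          (\<forall>c. \<forall>x\<in>X i. \<psi> i (c *\<^sub>R x) = c *\<^sub>R \<psi> i x) \<and>
          bounded_linear (inv_into (X i) (\<psi> i)) \<and>
          onorm (inv_into (X i) (\<psi> i)) = 1) \<and>
     (\<exists>K. \<forall>i. \<forall>x\<in>X i. norm (\<psi> i x) \<le> K * norm x) \<and>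
     lp_iso p (decomp_S \<psi> P)"

definition left_shift :: "(nat \<Rightarrow> 'a::real_normed_vector \<Rightarrow> 'a) \<Rightarrow> (nat \<Rightarrow> 'a \<Rightarrow> 'a) \<Rightarrow> 'a \<Rightarrow> 'a" where
  "left_shift \<psi> P x = inv (decomp_S \<psi> P) (\<lambda>i. decomp_S \<psi> P x (Suc i))"

definition op_matrix :: "('a::real_normed_vector \<Rightarrow> 'a) \<Rightarrow> ('a \<Rightarrow> 'a) \<Rightarrow> ('a \<Rightarrow> 'a) \<Rightarrow> ('a \<Rightarrow> 'a)
    \<Rightarrow> 'a \<times> 'a \<Rightarrow> 'a \<times> 'a" where
  "op_matrix A11 A12 A21 A22 z = (A11 (fst z) + A12 (snd z), A21 (fst z) + A22 (snd z))"

definition is_commutator :: "('b::real_normed_vector \<Rightarrow> 'b) \<Rightarrow> bool" where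
  "is_commutator T \<longleftrightarrow>
     (\<exists>A B. bounded_linear A \<and> bounded_linear B \<and> (\<forall>z. T z = A (B z) - B (A z)))"

end

theory Submission
  imports Defs
begin

text \<open>Let T = T1 + T3 and let D be the operator acting as T in every coordinate of the
  l_p-sum. Writing K, J for the head coordinate and its embedding and R for the right shift,
  R T L is a commutator [L2, H1] with a second shift L2, because D telescopes along L2.
  Conjugating the matrix by [[1, 0], [\<Gamma>, 1]] for suitable \<Gamma> turns its diagonal entries
  into R T L and into a commutator [L, H2]. Finally, any block matrix whose diagonal entries
  are commutators [D1, H1], [D2, H2] is a commutator: the off-diagonal entries of
  [diag (D1 + s, D2), [[H1, F], [G, H2]]] are Sylvester expressions in F and G, and for
  s > \<parallel>D1\<parallel> + \<parallel>D2\<parallel> the Banach fixed point theorem solves them for any right-hand sides.\<close>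

lemma sylvester_equation_solvable:
  fixes D1 D2 Y :: "'a::banach \<Rightarrow> 'a"
  assumes D1: "bounded_linear D1" and D2: "bounded_linear D2" and Y: "bounded_linear Y"
    and s: "s > onorm D1 + onorm D2"
  shows "\<exists>F. bounded_linear F \<and> (\<forall>z. D1 (F z) + s *\<^sub>R F z - F (D2 z) = Y z)"
proof -
  define d1 where "d1 = Blinfun D1"
  define d2 where "d2 = Blinfun D2"
  have norms: "norm d1 = onorm D1" "norm d2 = onorm D2"
    unfolding d1_def d2_def norm_blinfun.rep_eq using D1 D2
    by (simp_all add: bounded_linear_Blinfun_apply)
  have s_pos: "s > 0" using s onorm_pos_le[OF D1] onorm_pos_le[OF D2] by linarith
  define c where "c = (norm d1 + norm d2) / s"
  have c: "0 \<le> c" "c < 1"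
    using s s_pos norms onorm_pos_le[OF D1] onorm_pos_le[OF D2] unfolding c_def
    by (auto simp: field_simps)
  define f where "f = (\<lambda>x. (1/s) *\<^sub>R (Blinfun Y - (d1 o\<^sub>L x) + (x o\<^sub>L d2)))"
  have "dist (f x) (f x') \<le> c * dist x x'" for x x'
  proof -
    have "f x - f x' = (1/s) *\<^sub>R (((x - x') o\<^sub>L d2) - (d1 o\<^sub>L (x - x')))"
      unfolding f_def by (rule blinfun_eqI) (simp add: blinfun.bilinear_simps algebra_simps)
    hence "norm (f x - f x') = (1/s) * norm (((x - x') o\<^sub>L d2) - (d1 o\<^sub>L (x - x')))"
      using s_pos by simp
    also have "\<dots> \<le> (1/s) * (norm (x - x') * norm d2 + norm d1 * norm (x - x'))"
      using s_pos norm_blinfun_compose[of "x - x'" d2] norm_blinfun_compose[of d1 "x - x'"]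
      by (intro mult_left_mono) (auto intro: order_trans[OF norm_triangle_ineq4])
    also have "\<dots> = c * norm (x - x')" unfolding c_def by (simp add: field_simps)
    finally show ?thesis by (simp add: dist_norm)
  qed
  then obtain F where F: "f F = F" using banach_fix_type[OF c] by blast
  have fixed: "F z = (1/s) *\<^sub>R (Y z - D1 (F z) + F (D2 z))" for z
    by (subst F[symmetric]) (simp add: f_def d1_def d2_def blinfun.bilinear_simps
        bounded_linear_Blinfun_apply D1 D2 Y)
  have "s *\<^sub>R F z = Y z - D1 (F z) + F (D2 z)" for z
    using arg_cong[OF fixed[of z], of "scaleR s"] s_pos by simp
  then have "D1 (F z) + s *\<^sub>R F z - F (D2 z) = Y z" for z
    by (simp add: algebra_simps)
  then show ?thesis using blinfun.bounded_linear_right by blast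
qed

lemma is_commutator_similar:
  assumes "is_commutator T" and E: "bounded_linear E" and E': "bounded_linear E'"
    and E_E': "\<And>w. E (E' w) = w"
  shows "is_commutator (\<lambda>z. E' (T (E z)))"
proof -
  obtain A B where A: "bounded_linear A" and B: "bounded_linear B"
    and T: "\<And>z. T z = A (B z) - B (A z)"
    using assms(1) unfolding is_commutator_def by blast
  have "E' (T (E z)) = E' (A (E (E' (B (E z))))) - E' (B (E (E' (A (E z)))))" for z
    by (simp add: E_E' T linear_simps[OF E'])
  moreover have "bounded_linear (\<lambda>z. E' (A (E z)))" "bounded_linear (\<lambda>z. E' (B (E z)))"
    using A B E E' by (auto intro: bounded_linear_compose)
  ultimately show ?thesis unfolding is_commutator_def by blast
qed

lemma is_commutator_op_matrix:
  fixes D1 D2 H1 H2 Q12 Q21 :: "'a::banach \<Rightarrow> 'a"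
  assumes D1: "bounded_linear D1" and D2: "bounded_linear D2"
    and H1: "bounded_linear H1" and H2: "bounded_linear H2"
    and Q12: "bounded_linear Q12" and Q21: "bounded_linear Q21"
  shows "is_commutator
    (op_matrix (\<lambda>x. D1 (H1 x) - H1 (D1 x)) Q12 Q21 (\<lambda>y. D2 (H2 y) - H2 (D2 y)))"
proof -
  define s where "s = onorm D1 + onorm D2 + 1"
  have "s > onorm D1 + onorm D2" "s > onorm (\<lambda>y. - D2 y) + onorm (\<lambda>x. - D1 x)"
    unfolding s_def onorm_neg by simp_all
  then obtain F G where F: "bounded_linear F" and G: "bounded_linear G"
    and F_eq: "\<And>y. D1 (F y) + s *\<^sub>R F y - F (D2 y) = Q12 y"
    and G_eq: "\<And>x. - D2 (G x) + s *\<^sub>R G x - G (- D1 x) = - Q21 x"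
    using sylvester_equation_solvable[OF D1 D2 Q12]
      sylvester_equation_solvable[OF bounded_linear_minus[OF D2] bounded_linear_minus[OF D1]
        bounded_linear_minus[OF Q21]]
    by blast
  define A where "A = (\<lambda>(x, y). (D1 x + s *\<^sub>R x, D2 y))"
  define B where "B = (\<lambda>(x, y). (H1 x + F y, G x + H2 y))"
  have "bounded_linear A" unfolding A_def case_prod_beta
    by (intro bounded_linear_Pair bounded_linear_add bounded_linear_compose[OF D1]
        bounded_linear_compose[OF D2] bounded_linear_compose[OF bounded_linear_scaleR_right]
        bounded_linear_fst bounded_linear_snd)
  moreover have "bounded_linear B" unfolding B_def case_prod_beta
    by (intro bounded_linear_Pair bounded_linear_add bounded_linear_compose[OF H1]
        bounded_linear_compose[OF H2] bounded_linear_compose[OF F] bounded_linear_compose[OF G]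
        bounded_linear_fst bounded_linear_snd)
  moreover have "op_matrix (\<lambda>x. D1 (H1 x) - H1 (D1 x)) Q12 Q21 (\<lambda>y. D2 (H2 y) - H2 (D2 y)) z
      = A (B z) - B (A z)" for z
  proof (cases z)
    case (Pair x y)
    have "Q21 x = D2 (G x) - G (D1 x) - s *\<^sub>R G x"
      using G_eq[of x] by (simp add: linear_simps[OF G] algebra_simps)
    then have "A (B z) - B (A z) = (D1 (H1 x) - H1 (D1 x) + Q12 y, Q21 x + (D2 (H2 y) - H2 (D2 y)))"
      unfolding Pair A_def B_def F_eq[symmetric]
      by (simp add: linear_simps[OF D1] linear_simps[OF D2] linear_simps[OF H1]
          linear_simps[OF F] linear_simps[OF G] scaleR_add_right)
    then show ?thesis unfolding Pair op_matrix_def by simp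
  qed
  ultimately show ?thesis unfolding is_commutator_def by blast
qed

text \<open>x \<mapsto> (K x, L x) is an isomorphism X \<rightarrow> X \<oplus> X with inverse (a, b) \<mapsto> J a + R b.\<close>
locale shift_structure =
  fixes J K L R :: "'a::banach \<Rightarrow> 'a"
  assumes bounded_linear_J: "bounded_linear J" and bounded_linear_K: "bounded_linear K"
    and bounded_linear_L: "bounded_linear L" and bounded_linear_R: "bounded_linear R"
    and K_J [simp]: "K (J x) = x" and L_R [simp]: "L (R x) = x"
    and K_R [simp]: "K (R x) = 0" and L_J [simp]: "L (J x) = 0"
    and J_K_add_R_L: "J (K x) + R (L x) = x"
begin

lemmas JKLR_bounded_linear_compose = bounded_linear_compose[OF bounded_linear_J]
  bounded_linear_compose[OF bounded_linear_K] bounded_linear_compose[OF bounded_linear_L]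
  bounded_linear_compose[OF bounded_linear_R]

lemmas JKLR_linear_simps = linear_simps[OF bounded_linear_J] linear_simps[OF bounded_linear_K]
  linear_simps[OF bounded_linear_L] linear_simps[OF bounded_linear_R]

text \<open>Since L2 R2 = 1, we have [L2, R2 V] = V - R2 V L2 for every V. For V = D2, which acts
  as D on the head and as T on the tail, the splitting D = J T K + R D L gives R2 D2 L2 = J D K.\<close>
lemma right_shift_sandwich_is_commutator:
  assumes T: "bounded_linear T" and D: "bounded_linear D"
    and K_D: "\<And>x. K (D x) = T (K x)" and L_D: "\<And>x. L (D x) = D (L x)"
  obtains D1 H1 where "bounded_linear D1" "bounded_linear H1"
    "\<And>x. R (T (L x)) = D1 (H1 x) - H1 (D1 x)"
proof
  define L2 where "L2 x = J (L (K x)) + R (K (K x))" for x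
  define R2 where "R2 x = J (J (L x) + R (K x))" for x
  define D2 where "D2 x = R (T (L x)) + J (D (K x))" for x
  have L2_R2: "L2 (R2 w) = w" for w
    unfolding L2_def R2_def by (simp add: JKLR_linear_simps J_K_add_R_L)
  have D_split: "D y = J (T (K y)) + R (D (L y))" for y
    using J_K_add_R_L[of "D y"] by (simp add: K_D L_D)
  have "R2 (D2 (L2 x)) = J (D (K x))" for x
    unfolding L2_def R2_def D2_def
    by (simp add: JKLR_linear_simps linear_simps[OF T] linear_simps[OF D] D_split[of "K x"])
  then show "R (T (L x)) = L2 (R2 (D2 x)) - R2 (D2 (L2 x))" for x
    by (simp add: L2_R2 D2_def)
  show "bounded_linear L2" unfolding L2_def
    by (intro bounded_linear_add JKLR_bounded_linear_compose bounded_linear_K)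
  show "bounded_linear (\<lambda>x. R2 (D2 x))" unfolding R2_def D2_def
    by (intro bounded_linear_add JKLR_bounded_linear_compose bounded_linear_compose[OF T]
        bounded_linear_compose[OF D] bounded_linear_K bounded_linear_L)
qed

text \<open>Conjugation by the lower triangular matrix [[1, 0], [\<Gamma>, 1]] turns the diagonal entries
  into T1 - L \<Gamma> = R T L and T3 + \<Gamma> L = [L, R (T3 + R T L)], where T = T1 + T3.\<close>
lemma op_matrix_left_shift_is_commutator:
  assumes T1: "bounded_linear T1" and T2: "bounded_linear T2" and T3: "bounded_linear T3"
    and D: "bounded_linear D"
    and K_D: "\<And>x. K (D x) = T1 (K x) + T3 (K x)" and L_D: "\<And>x. L (D x) = D (L x)"
  shows "is_commutator (op_matrix T1 L T2 T3)"
proof -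
  define T where "T x = T1 x + T3 x" for x
  have T: "bounded_linear T" unfolding T_def using T1 T3 by (rule bounded_linear_add)
  obtain D1 H1 where D1: "bounded_linear D1" and H1: "bounded_linear H1"
    and RTL: "\<And>x. R (T (L x)) = D1 (H1 x) - H1 (D1 x)"
    using right_shift_sandwich_is_commutator[OF T D] K_D L_D unfolding T_def by blast
  define \<Gamma> where "\<Gamma> x = R (T1 x) - R (R (T (L x)))" for x
  define H2 where "H2 y = R (T3 y + R (T (L y)))" for y
  define Q21 where "Q21 x = \<Gamma> (T1 x - L (\<Gamma> x)) + T2 x - T3 (\<Gamma> x)" for x
  define E where "E = (\<lambda>(x, y). (x, \<Gamma> x + y))"
  define E' where "E' = (\<lambda>(x, y). (x, y - \<Gamma> x))"
  have \<Gamma>: "bounded_linear \<Gamma>" unfolding \<Gamma>_def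
    by (intro bounded_linear_sub JKLR_bounded_linear_compose bounded_linear_compose[OF T] T1
        bounded_linear_L)
  have H2: "bounded_linear H2" unfolding H2_def
    by (intro bounded_linear_add JKLR_bounded_linear_compose bounded_linear_compose[OF T] T3
        bounded_linear_L)
  have Q21: "bounded_linear Q21" unfolding Q21_def
    by (intro bounded_linear_add bounded_linear_sub bounded_linear_compose[OF \<Gamma>]
        bounded_linear_compose[OF T3] JKLR_bounded_linear_compose T1 T2 \<Gamma>)
  have E: "bounded_linear E" unfolding E_def case_prod_beta
    by (intro bounded_linear_Pair bounded_linear_add bounded_linear_fst bounded_linear_snd
        bounded_linear_compose[OF \<Gamma>])
  have E': "bounded_linear E'" unfolding E'_def case_prod_beta
    by (intro bounded_linear_Pair bounded_linear_sub bounded_linear_fst bounded_linear_snd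
        bounded_linear_compose[OF \<Gamma>])
  have E_E': "E (E' w) = w" for w unfolding E_def E'_def by (auto split: prod.split)
  have L_\<Gamma>: "L (\<Gamma> x) = T1 x - R (T (L x))" for x
    unfolding \<Gamma>_def by (simp add: JKLR_linear_simps)
  have L_H2: "L (H2 y) - H2 (L y) = T3 y + \<Gamma> (L y)" for y
    unfolding H2_def \<Gamma>_def T_def by (simp add: JKLR_linear_simps algebra_simps)
  define C where "C = op_matrix (\<lambda>x. D1 (H1 x) - H1 (D1 x)) L Q21 (\<lambda>y. L (H2 y) - H2 (L y))"
  have "op_matrix T1 L T2 T3 = (\<lambda>z. E' (C (E z)))"
  proof
    fix z
    show "op_matrix T1 L T2 T3 z = E' (C (E z))"
    proof (cases z)
      case (Pair x y)
      show ?thesis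
        unfolding Pair C_def E_def E'_def op_matrix_def L_H2 RTL[symmetric] Q21_def
        by (simp add: L_\<Gamma> JKLR_linear_simps linear_simps[OF T3] linear_simps[OF \<Gamma>] algebra_simps)
    qed
  qed
  moreover have "is_commutator (\<lambda>z. E' (C (E z)))" unfolding C_def
    by (rule is_commutator_similar[OF is_commutator_op_matrix[OF D1 bounded_linear_L H1 H2
          bounded_linear_L Q21] E E' E_E'])
  ultimately show ?thesis by simp
qed

end

lemma valid_p_cases:
  assumes "valid_p p"
  obtains "p = 0" | "p = \<infinity>" | q where "p = ereal q" "1 \<le> q"
  using assms unfolding valid_p_def by (cases p) auto

lemma lp_seq_single:
  fixes x :: "'a::real_normed_vector"
  assumes "valid_p p"
  shows "(\<lambda>n. if n = 0 then x else 0) \<in> lp_seq p \<and>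
    lp_norm p (\<lambda>n. if n = 0 then x else 0) = norm x"
proof -
  define t where "t n = (if n = 0 then x else 0)" for n :: nat
  have norm_t: "norm (t n) = (if n = 0 then norm x else 0)" for n by (simp add: t_def)
  have SUP_t: "(SUP n. norm (t n)) = norm x"
    by (rule cSup_eq_maximum) (auto simp: norm_t image_iff intro: exI[of _ 0])
  have "t \<in> lp_seq p \<and> lp_norm p t = norm x"
    using assms
  proof (cases rule: valid_p_cases)
    case 1
    have "(\<lambda>n. t (Suc n)) \<longlonglongrightarrow> 0" by (simp add: t_def)
    then show ?thesis using 1 SUP_t unfolding lp_seq_def lp_norm_def by (simp add: LIMSEQ_imp_Suc)
  next
    case 2
    have "bounded (range t)" unfolding bounded_iff by (auto simp: norm_t)
    then show ?thesis using 2 SUP_t unfolding lp_seq_def lp_norm_def by simp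
  next
    case (3 q)
    have "(\<lambda>n. norm (t n) powr q) = (\<lambda>n. if n = 0 then norm x powr q else 0)"
      using 3 by (auto simp: norm_t)
    then have "(\<lambda>n. norm (t n) powr q) sums (norm x powr q)"
      using sums_single[of 0 "\<lambda>_. norm x powr q"] by simp
    then show ?thesis using 3 unfolding lp_seq_def lp_norm_def
      by (auto simp: sums_iff powr_powr)
  qed
  then show ?thesis unfolding t_def .
qed

text \<open>The reindexing f only needs to be injective on the support of t; this is what allows
  the right shift, whose first entry is 0, to be dominated via n \<mapsto> n - 1.\<close>
lemma lp_seq_dominated:
  fixes s :: "nat \<Rightarrow> 'a::real_normed_vector" and t :: "nat \<Rightarrow> 'b::real_normed_vector"
  assumes p: "valid_p p" and s: "s \<in> lp_seq p" and B: "0 \<le> B"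
    and inj: "inj_on f {n. t n \<noteq> 0}" and dom: "\<And>n. norm (t n) \<le> B * norm (s (f n))"
  shows "t \<in> lp_seq p \<and> lp_norm p t \<le> B * lp_norm p s"
proof -
  have SUP_le: "(SUP n. norm (t n)) \<le> B * (SUP n. norm (s n))"
    if bdd: "bdd_above (range (\<lambda>n. norm (s n)))"
  proof (rule cSUP_least)
    show "norm (t n) \<le> B * (SUP n. norm (s n))" for n
      using dom[of n] mult_left_mono[OF cSUP_upper[OF UNIV_I bdd, of "f n"] B] by linarith
  qed simp
  show ?thesis
    using p
  proof (cases rule: valid_p_cases)
    case 1
    then have s0: "s \<longlonglongrightarrow> 0" using s unfolding lp_seq_def by simp
    have "t \<longlonglongrightarrow> 0" unfolding LIMSEQ_iff
    proof (intro allI impI)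
      fix r :: real assume "r > 0"
      have "(\<lambda>m. B * norm (s m)) \<longlonglongrightarrow> 0"
        by (rule tendsto_mult_right_zero[OF tendsto_norm_zero[OF s0]])
      with \<open>r > 0\<close> obtain M where M: "\<And>m. M \<le> m \<Longrightarrow> B * norm (s m) < r"
        unfolding LIMSEQ_iff by fastforce
      have "finite {n. t n \<noteq> 0 \<and> f n < M}"
        by (rule inj_on_finite[of f _ "{..<M}"]) (auto intro: inj_on_subset[OF inj])
      then obtain N where N: "{n. t n \<noteq> 0 \<and> f n < M} \<subseteq> {..<N}"
        using finite_nat_bounded by blast
      have "norm (t n - 0) < r" if "N \<le> n" for n
      proof (cases "t n = 0")
        case False
        then have "M \<le> f n" using N that by fastforce
        then show ?thesis using dom[of n] M[of "f n"] by simp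
      qed (simp add: \<open>r > 0\<close>)
      then show "\<exists>N. \<forall>n\<ge>N. norm (t n - 0) < r" by blast
    qed
    moreover have "bdd_above (range (\<lambda>n. norm (s n)))"
      using convergent_imp_bounded[OF s0] unfolding bounded_iff bdd_above_def by auto
    ultimately show ?thesis using 1 SUP_le unfolding lp_seq_def lp_norm_def by simp
  next
    case 2
    then have bdd: "bdd_above (range (\<lambda>n. norm (s n)))"
      using s unfolding lp_seq_def bounded_iff bdd_above_def by auto
    have "bounded (range t)" unfolding bounded_iff
      using order_trans[OF dom mult_left_mono[OF cSUP_upper[OF UNIV_I bdd] B]] by blast
    then show ?thesis using 2 SUP_le[OF bdd] unfolding lp_seq_def lp_norm_def by simp
  next
    case (3 q)
    have q: "0 < q" using 3 by simp
    have s_sum: "summable (\<lambda>m. norm (s m) powr q)" using s 3 unfolding lp_seq_def by simp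
    have t_le: "norm (t n) powr q \<le> B powr q * norm (s (f n)) powr q" for n
      using powr_mono2[OF less_imp_le[OF q] norm_ge_zero dom[of n]] B by (simp add: powr_mult)
    have partial: "(\<Sum>n<N. norm (t n) powr q) \<le> B powr q * (\<Sum>m. norm (s m) powr q)" for N
    proof -
      define A where "A = {n. t n \<noteq> 0} \<inter> {..<N}"
      have "(\<Sum>n<N. norm (t n) powr q) = (\<Sum>n\<in>A. norm (t n) powr q)"
        unfolding A_def by (rule sum.mono_neutral_right) auto
      also have "\<dots> \<le> (\<Sum>n\<in>A. B powr q * norm (s (f n)) powr q)"
        by (rule sum_mono) (rule t_le)
      also have "\<dots> = B powr q * (\<Sum>m\<in>f ` A. norm (s m) powr q)"
        unfolding sum_distrib_left A_def
        by (rule sum.reindex[symmetric, unfolded comp_def]) (auto intro: inj_on_subset[OF inj])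
      also have "\<dots> \<le> B powr q * (\<Sum>m. norm (s m) powr q)"
        by (intro mult_left_mono sum_le_suminf[OF s_sum]) (auto simp: A_def)
      finally show ?thesis .
    qed
    have t_sum: "summable (\<lambda>n. norm (t n) powr q)"
      by (rule summableI_nonneg_bounded[OF _ partial]) simp
    have "(\<Sum>n. norm (t n) powr q) powr (1/q) \<le> (B powr q * (\<Sum>m. norm (s m) powr q)) powr (1/q)"
      using suminf_le_const[OF t_sum partial] suminf_nonneg[OF t_sum] q by (intro powr_mono2) auto
    also have "\<dots> = B * (\<Sum>m. norm (s m) powr q) powr (1/q)"
      using B q suminf_nonneg[OF s_sum] by (simp add: powr_mult powr_powr)
    finally show ?thesis using t_sum 3 unfolding lp_seq_def lp_norm_def by simp
  qed
qed

locale lp_sum_iso =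
  fixes p :: ereal and S :: "'a::banach \<Rightarrow> nat \<Rightarrow> 'a"
  assumes valid_p: "valid_p p" and lp_iso: "lp_iso p S"
begin

lemma S_add: "S (x + y) = (\<lambda>n. S x n + S y n)"
  and S_scaleR: "S (c *\<^sub>R x) = (\<lambda>n. c *\<^sub>R S x n)"
  and range_S: "range S = lp_seq p"
  using lp_iso unfolding lp_iso_def by auto

lemma S_zero: "S 0 = (\<lambda>n. 0)"
  using S_scaleR[of 0 0] by simp

lemma S_in_lp_seq [simp]: "S x \<in> lp_seq p"
  using range_S by blast

lemma S_bounded: obtains C where "\<And>x. lp_norm p (S x) \<le> C * norm x"
  using lp_iso that unfolding lp_iso_def by blast

lemma S_bounded_below: obtains c where "0 < c" "\<And>x. c * norm x \<le> lp_norm p (S x)"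
  using lp_iso that unfolding lp_iso_def by blast

lemma inj_S: "inj S"
proof (rule injI)
  fix x y assume "S x = S y"
  then have "S (x - y) = S 0"
    using S_add[of x "- y"] S_scaleR[of "-1" y] S_scaleR[of "-1" x] by (simp add: S_zero fun_eq_iff)
  obtain C where C: "\<And>x. lp_norm p (S x) \<le> C * norm x" using S_bounded by blast
  obtain c where c: "0 < c" "\<And>x. c * norm x \<le> lp_norm p (S x)" using S_bounded_below by blast
  have "c * norm (x - y) \<le> C * norm (0::'a)"
    using c(2)[of "x - y"] C[of 0] \<open>S (x - y) = S 0\<close> by simp
  with c(1) show "x = y" by (simp add: mult_le_0_iff)
qed

lemma inv_S_S [simp]: "inv S (S x) = x"
  using inj_S by simp

lemma S_inv_S [simp]: "s \<in> lp_seq p \<Longrightarrow> S (inv S s) = s"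
  using range_S by (metis f_inv_into_f)

lemma S_eqD: "S x = S y \<Longrightarrow> x = y"
  using inj_S by (rule injD)

lemma bounded_linear_transport:
  assumes add: "\<And>a b. \<Phi> (\<lambda>n. a n + b n) = (\<lambda>n. \<Phi> a n + \<Phi> b n)"
    and scale: "\<And>r a. \<Phi> (\<lambda>n. r *\<^sub>R a n) = (\<lambda>n. r *\<^sub>R \<Phi> a n)"
    and bound: "\<And>a. a \<in> lp_seq p \<Longrightarrow> \<Phi> a \<in> lp_seq p \<and> lp_norm p (\<Phi> a) \<le> B * lp_norm p a"
    and B: "0 \<le> B"
  shows "bounded_linear (\<lambda>z. inv S (\<Phi> (S z)))"
proof -
  obtain C where C: "\<And>x. lp_norm p (S x) \<le> C * norm x" using S_bounded by blast
  obtain c where c: "0 < c" "\<And>x. c * norm x \<le> lp_norm p (S x)" using S_bounded_below by blast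
  show ?thesis
  proof (rule bounded_linear_intro)
    show "inv S (\<Phi> (S (x + y))) = inv S (\<Phi> (S x)) + inv S (\<Phi> (S y))" for x y
    proof (rule S_eqD)
      have "S (inv S (\<Phi> (S (x + y)))) = \<Phi> (S (x + y))" by (simp add: bound)
      then show "S (inv S (\<Phi> (S (x + y)))) = S (inv S (\<Phi> (S x)) + inv S (\<Phi> (S y)))"
        by (simp add: S_add add bound)
    qed
    show "inv S (\<Phi> (S (r *\<^sub>R x))) = r *\<^sub>R inv S (\<Phi> (S x))" for r x
    proof (rule S_eqD)
      have "S (inv S (\<Phi> (S (r *\<^sub>R x)))) = \<Phi> (S (r *\<^sub>R x))" by (simp add: bound)
      then show "S (inv S (\<Phi> (S (r *\<^sub>R x)))) = S (r *\<^sub>R inv S (\<Phi> (S x)))"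
        by (simp add: S_scaleR scale bound)
    qed
    show "norm (inv S (\<Phi> (S x))) \<le> norm x * (B * C / c)" for x
    proof -
      have "c * norm (inv S (\<Phi> (S x))) \<le> lp_norm p (\<Phi> (S x))"
        using c(2)[of "inv S (\<Phi> (S x))"] bound by simp
      also have "\<dots> \<le> B * (C * norm x)"
        using bound[of "S x"] mult_left_mono[OF C B] by (meson S_in_lp_seq order_trans)
      finally show ?thesis using c(1) by (simp add: field_simps)
    qed
  qed
qed

definition head :: "'a \<Rightarrow> 'a" where
  "head z = S z 0"

definition embed_head :: "'a \<Rightarrow> 'a" where
  "embed_head x = inv S (\<lambda>n. if n = 0 then x else 0)"

definition shift_left :: "'a \<Rightarrow> 'a" where
  "shift_left z = inv S (\<lambda>n. S z (Suc n))"

definition shift_right :: "'a \<Rightarrow> 'a" where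
  "shift_right z = inv S (case_nat 0 (S z))"

definition diagonal :: "('a \<Rightarrow> 'a) \<Rightarrow> 'a \<Rightarrow> 'a" where
  "diagonal T z = inv S (\<lambda>n. T (S z n))"

lemma norm_le_lp_norm_0: "s \<in> lp_seq p \<Longrightarrow> norm (s 0) \<le> lp_norm p s"
  using lp_seq_single[OF valid_p, of "s 0"]
    lp_seq_dominated[OF valid_p, of s 1 id "\<lambda>n. if n = 0 then s 0 else 0"] by simp

lemma shift_left_bound:
  "s \<in> lp_seq p \<Longrightarrow>
    (\<lambda>n. s (Suc n)) \<in> lp_seq p \<and> lp_norm p (\<lambda>n. s (Suc n)) \<le> 1 * lp_norm p s"
  by (rule lp_seq_dominated[OF valid_p, where f = Suc]) auto

lemma shift_right_bound:
  "s \<in> lp_seq p \<Longrightarrow> case_nat 0 s \<in> lp_seq p \<and> lp_norm p (case_nat 0 s) \<le> 1 * lp_norm p s"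
  by (rule lp_seq_dominated[OF valid_p, where f = "\<lambda>n. n - 1"])
    (auto simp: inj_on_def split: nat.splits)

lemma diagonal_bound:
  assumes "bounded_linear T"
  obtains B where "0 \<le> B"
    "\<And>s. s \<in> lp_seq p \<Longrightarrow>
      (\<lambda>n. T (s n)) \<in> lp_seq p \<and> lp_norm p (\<lambda>n. T (s n)) \<le> B * lp_norm p s"
proof -
  obtain B where "\<And>x. norm (T x) \<le> norm x * B" "0 < B"
    using bounded_linear.pos_bounded[OF assms] by blast
  then show ?thesis
    by (intro that[of B] lp_seq_dominated[OF valid_p, where f = id]) (auto simp: mult.commute)
qed

lemma S_embed_head: "S (embed_head x) = (\<lambda>n. if n = 0 then x else 0)"
  unfolding embed_head_def by (simp add: lp_seq_single[OF valid_p])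

lemma S_shift_left: "S (shift_left z) = (\<lambda>n. S z (Suc n))"
  unfolding shift_left_def by (simp add: shift_left_bound)

lemma S_shift_right: "S (shift_right z) = case_nat 0 (S z)"
  unfolding shift_right_def by (simp add: shift_right_bound)

lemma S_diagonal: "bounded_linear T \<Longrightarrow> S (diagonal T z) = (\<lambda>n. T (S z n))"
  unfolding diagonal_def by (metis diagonal_bound S_in_lp_seq S_inv_S)

lemma bounded_linear_diagonal:
  assumes T: "bounded_linear T"
  shows "bounded_linear (diagonal T)"
proof -
  obtain B where "0 \<le> B"
    and B: "\<And>s. s \<in> lp_seq p \<Longrightarrow>
      (\<lambda>n. T (s n)) \<in> lp_seq p \<and> lp_norm p (\<lambda>n. T (s n)) \<le> B * lp_norm p s"
    using diagonal_bound[OF T] by blast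
  show ?thesis unfolding diagonal_def[abs_def]
    by (rule bounded_linear_transport[OF _ _ B \<open>0 \<le> B\<close>]) (simp_all add: linear_simps[OF T])
qed

lemma bounded_linear_head: "bounded_linear head"
proof -
  obtain C where C: "\<And>x. lp_norm p (S x) \<le> C * norm x" using S_bounded by blast
  show ?thesis
  proof (rule bounded_linear_intro)
    show "norm (head x) \<le> norm x * max C 0" for x
      using norm_le_lp_norm_0[OF S_in_lp_seq, of x] C[of x]
        mult_right_mono[of C "max C 0" "norm x"] unfolding head_def by (simp add: mult.commute)
  qed (simp_all add: head_def S_add S_scaleR)
qed

lemma bounded_linear_embed_head: "bounded_linear embed_head"
proof -
  obtain c where c: "0 < c" "\<And>x. c * norm x \<le> lp_norm p (S x)" using S_bounded_below by blast
  show ?thesis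
  proof (rule bounded_linear_intro)
    show "norm (embed_head x) \<le> norm x * (1 / c)" for x
      using c(2)[of "embed_head x"] c(1) lp_seq_single[OF valid_p, of x]
      by (simp add: S_embed_head field_simps)
  qed (rule S_eqD, simp add: S_add S_scaleR S_embed_head fun_eq_iff)+
qed

lemma shift_structure: "shift_structure embed_head head shift_left shift_right"
proof (rule shift_structure.intro)
  show "bounded_linear shift_left" unfolding shift_left_def[abs_def]
    by (rule bounded_linear_transport[OF _ _ shift_left_bound]) auto
  show "bounded_linear shift_right" unfolding shift_right_def[abs_def]
    by (rule bounded_linear_transport[OF _ _ shift_right_bound]) (auto split: nat.split)
  show "bounded_linear head" "bounded_linear embed_head"
    by (fact bounded_linear_head bounded_linear_embed_head)+
  show "head (embed_head x) = x" for x by (simp add: head_def S_embed_head)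
  show "shift_left (shift_right x) = x" for x by (simp add: shift_left_def S_shift_right)
  show "head (shift_right x) = 0" for x by (simp add: head_def S_shift_right)
  show "shift_left (embed_head x) = 0" for x
    by (simp add: shift_left_def S_embed_head flip: S_zero)
  show "embed_head (head x) + shift_right (shift_left x) = x" for x
    by (rule S_eqD) (auto simp: S_add S_embed_head S_shift_right S_shift_left head_def
        split: nat.split)
qed

lemma head_diagonal: "bounded_linear T \<Longrightarrow> head (diagonal T x) = T (head x)"
  by (simp add: head_def S_diagonal)

lemma shift_left_diagonal:
  "bounded_linear T \<Longrightarrow> shift_left (diagonal T x) = diagonal T (shift_left x)"
  by (rule S_eqD) (simp add: S_diagonal S_shift_left)

end

text \<open>The isomorphism of X with its l_p-sum is already supplied by the decomposition.\<close>
theorem mainTheorem9: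
  fixes p :: ereal
    and X :: "nat \<Rightarrow> 'a::banach set"
    and P \<psi> :: "nat \<Rightarrow> 'a \<Rightarrow> 'a"
    and T1 T2 T3 :: "'a \<Rightarrow> 'a"
  assumes "valid_p p"
    and "isomorphic_to_lp_sum p TYPE('a)"
    and "decomposition p X P \<psi>"
    and "bounded_linear T1" and "bounded_linear T2" and "bounded_linear T3"
  shows "is_commutator (op_matrix T1 (left_shift \<psi> P) T2 T3)"
proof -
  interpret lp_sum_iso p "decomp_S \<psi> P"
    using assms(1,3) unfolding decomposition_def by unfold_locales blast+
  have "left_shift \<psi> P = shift_left"
    unfolding left_shift_def shift_left_def by (rule ext) simp
  moreover have T: "bounded_linear (\<lambda>x. T1 x + T3 x)"
    using assms(4,6) by (rule bounded_linear_add)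
  ultimately show ?thesis
    using shift_structure.op_matrix_left_shift_is_commutator[OF shift_structure assms(4-6)
        bounded_linear_diagonal[OF T]] head_diagonal[OF T] shift_left_diagonal[OF T]
    by simp
qed

end
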